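(* Let $r\in\{0,\ldots,N\}$ and suppose $\xi_r(\varpi^N)<1/2$. Then for all $A,A'\in\mathbb{R}^{n\times s}$, $$\|\phi(A')-\phi(A)\|_1\le \frac{1}{1-2\xi_r(\varpi^N)}\Big(\mathcal{J}(A')-\mathcal{J}(A)+2\delta_r(A)\Big).$$
   Context: Data: integers $n,s,N\ge1$ and a dataset $\varpi^N=((x_1,y_1),\ldots,(x_N,y_N))$ with $x_t\in\mathbb{R}^n$, $y_t\in\mathbb{R}$. Let $\mathbb{T}=\{1,\ldots,N\}$, $\mathbb{S}=\{1,\ldots,s\}$. For $A=[a_1\ \cdots\ a_s]\in\mathbb{R}^{n\times s}$, $\sigma_A:\mathbb{T}\to\mathbb{S}$ is a switching signal satisfying $\sigma_A(t)\in\arg\min_{i\in\mathbb{S}}|y_t-x_t^\top a_i|$ for all $t$, selected uniquely by a fixed rule depending only on $A$ and the data (among all admissible choices, one maximizing $\min_{i}|I_i(A)|$, ties then broken by assigning the smallest admissible index). $I_i(A)=\{t\in\mathbb{T}:\sigma_A(t)=i\}$. Define $\phi(A)=\big(y_1-x_1^\top a_{\sigma_A(1)},\ldots,y_N-x_N^\top a_{\sigma_A(N)}\big)^\top\in\mathbb{R}^N$ and $\mathcal{J}(A)=\|\phi(A)\|_1=\sum_{t=1}^N\min_{i\in\mathbb{S}}|y_t-a_i^\top x_t|$. For $\mathcal{T}\subset\mathbb{T}$, $\phi_{\mathcal{T}}(A)$ is the subvector of $\phi(A)$ indexed by $\mathcal{T}$. $\mathcal{S}_r=\{w\in\mathbb{R}^N:\|w\|_0\le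 r\}$ ($\|w\|_0$ = number of nonzero entries), and $\delta_r(A)=\inf_{w\in\mathcal{S}_r}\|\phi(A)-w\|_1$, i.e. the sum of the $N-r$ smallest absolute values of entries of $\phi(A)$. The $r$-th concentration ratio is $$\xi_r(\varpi^N)=\sup\Big\{\frac{\|\phi_{\mathcal{T}}(A)-\phi_{\mathcal{T}}(A')\|_1}{\|\phi(A)-\phi(A')\|_1}: A,A'\in\mathbb{R}^{n\times s},\ \mathcal{T}\subset\mathbb{T},\ \phi(A)\ne\phi(A'),\ |\mathcal{T}|\le r\Big\}.$$ *)

theory Defs
  imports "HOL-Analysis.Analysis" "HOL-Library.List_Lexorder"
begin

text \<open>A parameter matrix A = [a_1 ... a_s] is represented by its columns A i :: real^'n,
  only i in {1..s} being relevant. Vectors of R^N are functions nat => real,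
  indexed by {1..N}.\<close>

definition res :: "(nat \<Rightarrow> real^'n) \<Rightarrow> (nat \<Rightarrow> real) \<Rightarrow> (nat \<Rightarrow> real^'n) \<Rightarrow> nat \<Rightarrow> nat \<Rightarrow> real" where
  "res x y A t i = y t - (x t \<bullet> A i)"

text \<open>A switching signal is encoded as a list sl of length N, with sigma(t) = sl ! (t - 1).\<close>
definition admissible_signal ::
  "(nat \<Rightarrow> real^'n) \<Rightarrow> (nat \<Rightarrow> real) \<Rightarrow> nat \<Rightarrow> nat \<Rightarrow> (nat \<Rightarrow> real^'n) \<Rightarrow> nat list \<Rightarrow> bool" where
  "admissible_signal x y N s A sl \<longleftrightarrow> length sl = N \<and>
     (\<forall>t\<in>{1..N}. sl ! (t - 1) \<in> {1..s} \<and>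
        (\<forall>i\<in>{1..s}. \<bar>res x y A t (sl ! (t - 1))\<bar> \<le> \<bar>res x y A t i\<bar>))"

definition mode_card :: "nat \<Rightarrow> nat list \<Rightarrow> nat \<Rightarrow> nat" where
  "mode_card N sl i = card {t\<in>{1..N}. sl ! (t - 1) = i}"

definition min_mode_card :: "nat \<Rightarrow> nat \<Rightarrow> nat list \<Rightarrow> nat" where
  "min_mode_card N s sl = Min ((mode_card N sl) ` {1..s})"

definition best_signal ::
  "(nat \<Rightarrow> real^'n) \<Rightarrow> (nat \<Rightarrow> real) \<Rightarrow> nat \<Rightarrow> nat \<Rightarrow> (nat \<Rightarrow> real^'n) \<Rightarrow> nat list \<Rightarrow> bool" where
  "best_signal x y N s A sl \<longleftrightarrow> admissible_signal x y N s A sl \<and>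
     (\<forall>sl'. admissible_signal x y N s A sl' \<longrightarrow> min_mode_card N s sl' \<le> min_mode_card N s sl)"

text \<open>Tie-break: lexicographically smallest (sigma(1), ..., sigma(N)) among the best signals.\<close>
definition sigma_sig ::
  "(nat \<Rightarrow> real^'n) \<Rightarrow> (nat \<Rightarrow> real) \<Rightarrow> nat \<Rightarrow> nat \<Rightarrow> (nat \<Rightarrow> real^'n) \<Rightarrow> nat \<Rightarrow> nat" where
  "sigma_sig x y N s A t = Min {sl. best_signal x y N s A sl} ! (t - 1)"

definition phi ::
  "(nat \<Rightarrow> real^'n) \<Rightarrow> (nat \<Rightarrow> real) \<Rightarrow> nat \<Rightarrow> nat \<Rightarrow> (nat \<Rightarrow> real^'n) \<Rightarrow> nat \<Rightarrow> real" where
  "phi x y N s A t = (if t \<in> {1..N} then res x y A t (sigma_sig x y N s A t) else 0)"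

definition l1norm :: "nat \<Rightarrow> (nat \<Rightarrow> real) \<Rightarrow> real" where
  "l1norm N v = (\<Sum>t=1..N. \<bar>v t\<bar>)"

definition Jcost ::
  "(nat \<Rightarrow> real^'n) \<Rightarrow> (nat \<Rightarrow> real) \<Rightarrow> nat \<Rightarrow> nat \<Rightarrow> (nat \<Rightarrow> real^'n) \<Rightarrow> real" where
  "Jcost x y N s A = (\<Sum>t=1..N. Min ((\<lambda>i. \<bar>res x y A t i\<bar>) ` {1..s}))"

definition l0 :: "nat \<Rightarrow> (nat \<Rightarrow> real) \<Rightarrow> nat" where
  "l0 N w = card {t\<in>{1..N}. w t \<noteq> 0}"

definition delta ::
  "(nat \<Rightarrow> real^'n) \<Rightarrow> (nat \<Rightarrow> real) \<Rightarrow> nat \<Rightarrow> nat \<Rightarrow> nat \<Rightarrow> (nat \<Rightarrow> real^'n) \<Rightarrow> real" where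
  "delta x y N s r A = Inf {l1norm N (\<lambda>t. phi x y N s A t - w t) | w. l0 N w \<le> r}"

definition xi :: "(nat \<Rightarrow> real^'n) \<Rightarrow> (nat \<Rightarrow> real) \<Rightarrow> nat \<Rightarrow> nat \<Rightarrow> nat \<Rightarrow> real" where
  "xi x y N s r = Sup {(\<Sum>t\<in>T. \<bar>phi x y N s A t - phi x y N s A' t\<bar>)
                        / l1norm N (\<lambda>t. phi x y N s A t - phi x y N s A' t) | A A' T.
        T \<subseteq> {1..N} \<and> (\<exists>t\<in>{1..N}. phi x y N s A t \<noteq> phi x y N s A' t) \<and> card T \<le> r}"

end

theory Submission
  imports Defs
begin

text \<open>Since the selected signal is admissible, \<open>\<bar>\<phi>(A)\<bar>\<close> is the pointwise minimal residual and
  \<open>J(A) = \<parallel>\<phi>(A)\<parallel>\<^sub>1\<close>. Put \<open>v = \<phi>(A') - \<phi>(A)\<close> and let \<open>w\<close> be any \<open>r\<close>-sparse vector with support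
  \<open>T\<close>. On \<open>T\<close> we have \<open>\<bar>\<phi>\<^sub>t(A')\<bar> - \<bar>\<phi>\<^sub>t(A)\<bar> \<ge> -\<bar>v\<^sub>t\<bar>\<close>, off \<open>T\<close> the triangle inequality gives
  \<open>\<bar>\<phi>\<^sub>t(A')\<bar> - \<bar>\<phi>\<^sub>t(A)\<bar> \<ge> \<bar>v\<^sub>t\<bar> - 2\<bar>\<phi>\<^sub>t(A) - w\<^sub>t\<bar>\<close>; summing,
  \<open>J(A') - J(A) + 2\<parallel>\<phi>(A) - w\<parallel>\<^sub>1 \<ge> \<parallel>v\<parallel>\<^sub>1 - 2\<parallel>v\<^sub>T\<parallel>\<^sub>1 \<ge> (1 - 2\<xi>\<^sub>r)\<parallel>v\<parallel>\<^sub>1\<close> by the definition of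
  the concentration ratio. Taking the infimum over \<open>w\<close> gives the claim.\<close>

lemma admissible_signal_set:
  assumes "admissible_signal x y N s A sl"
  shows "set sl \<subseteq> {1..s}" and "length sl = N"
proof -
  show len: "length sl = N" using assms by (simp add: admissible_signal_def)
  show "set sl \<subseteq> {1..s}"
  proof
    fix i assume "i \<in> set sl"
    then obtain k where "k < N" "sl ! k = i" using len by (auto simp: in_set_conv_nth)
    with assms have "sl ! (Suc k - 1) \<in> {1..s}"
      unfolding admissible_signal_def by (metis Suc_leI atLeastAtMost_iff le_add1 plus_1_eq_Suc)
    then show "i \<in> {1..s}" using \<open>sl ! k = i\<close> by simp
  qed
qed

lemma finite_admissible_signals: "finite {sl. admissible_signal x y N s A sl}"
proof (rule finite_subset)
  show "{sl. admissible_signal x y N s A sl} \<subseteq> {sl. set sl \<subseteq> {1..s} \<and> length sl = N}"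
    using admissible_signal_set by blast
  show "finite {sl. set sl \<subseteq> {1..s} \<and> length sl = N}"
    by (rule finite_lists_length_eq) simp
qed

lemma admissible_signal_exists:
  assumes "s \<ge> 1"
  shows "\<exists>sl. admissible_signal x y N s A sl"
proof -
  have "\<exists>i\<in>{1..s}. \<forall>j\<in>{1..s}. \<bar>res x y A t i\<bar> \<le> \<bar>res x y A t j\<bar>" for t
  proof -
    let ?f = "\<lambda>i. \<bar>res x y A t i\<bar>"
    have "Min (?f ` {1..s}) \<in> ?f ` {1..s}" using assms by (intro Min_in) auto
    then obtain i where "i \<in> {1..s}" "?f i = Min (?f ` {1..s})" by auto
    then show ?thesis by (intro bexI[of _ i]) auto
  qed
  then obtain g where g: "\<And>t. g t \<in> {1..s} \<and> (\<forall>j\<in>{1..s}. \<bar>res x y A t (g t)\<bar> \<le> \<bar>res x y A t j\<bar>)"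
    by metis
  have "map g [1..<N+1] ! (t - 1) = g t" if "t \<in> {1..N}" for t
    using that by (auto simp del: upt_Suc)
  then have "admissible_signal x y N s A (map g [1..<N+1])"
    using g unfolding admissible_signal_def by auto
  then show ?thesis by blast
qed

lemma admissible_selected_signal:
  assumes "s \<ge> 1"
  shows "admissible_signal x y N s A (Min {sl. best_signal x y N s A sl})"
proof -
  let ?S = "{sl. admissible_signal x y N s A sl}"
  have fin: "finite (min_mode_card N s ` ?S)" by (intro finite_imageI finite_admissible_signals)
  have ne: "min_mode_card N s ` ?S \<noteq> {}" using admissible_signal_exists[OF assms] by auto
  obtain sl0 where "sl0 \<in> ?S" "min_mode_card N s sl0 = Max (min_mode_card N s ` ?S)"
    using Max_in[OF fin ne] by auto
  then have "best_signal x y N s A sl0"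
    unfolding best_signal_def using Max_ge[OF fin] by auto
  moreover have "finite {sl. best_signal x y N s A sl}"
    by (rule finite_subset[OF _ finite_admissible_signals]) (auto simp: best_signal_def)
  ultimately have "Min {sl. best_signal x y N s A sl} \<in> {sl. best_signal x y N s A sl}"
    by (intro Min_in) auto
  then show ?thesis by (simp add: best_signal_def)
qed

lemma abs_phi_eq_Min_res:
  assumes "s \<ge> 1" "t \<in> {1..N}"
  shows "\<bar>phi x y N s A t\<bar> = Min ((\<lambda>i. \<bar>res x y A t i\<bar>) ` {1..s})"
proof -
  let ?i = "sigma_sig x y N s A t"
  have "?i \<in> {1..s}" "\<forall>j\<in>{1..s}. \<bar>res x y A t ?i\<bar> \<le> \<bar>res x y A t j\<bar>"
    using admissible_selected_signal[OF assms(1), of x y N A] assms(2)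
    unfolding admissible_signal_def sigma_sig_def by auto
  then have "Min ((\<lambda>i. \<bar>res x y A t i\<bar>) ` {1..s}) = \<bar>res x y A t ?i\<bar>"
    by (intro Min_eqI) auto
  then show ?thesis using assms(2) by (simp add: phi_def)
qed

lemma Jcost_eq_l1norm_phi:
  assumes "s \<ge> 1"
  shows "Jcost x y N s A = l1norm N (phi x y N s A)"
  unfolding Jcost_def l1norm_def
  by (rule sum.cong[OF refl]) (rule abs_phi_eq_Min_res[OF assms, symmetric])

lemma l1norm_nonneg: "0 \<le> l1norm N v"
  unfolding l1norm_def by (simp add: sum_nonneg)

lemma l1norm_pos_iff: "l1norm N v > 0 \<longleftrightarrow> (\<exists>t\<in>{1..N}. v t \<noteq> 0)"
proof -
  have "l1norm N v = 0 \<longleftrightarrow> (\<forall>t\<in>{1..N}. v t = 0)"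
    unfolding l1norm_def by (simp add: sum_nonneg_eq_0_iff)
  then show ?thesis using l1norm_nonneg[of N v] by (auto simp: order_less_le)
qed

lemma sum_abs_le_l1norm: "T \<subseteq> {1..N} \<Longrightarrow> (\<Sum>t\<in>T. \<bar>v t\<bar>) \<le> l1norm N v"
  unfolding l1norm_def by (rule sum_mono2) auto

lemma sum_abs_phi_diff_le_xi:
  assumes "T \<subseteq> {1..N}" "card T \<le> r"
  shows "(\<Sum>t\<in>T. \<bar>phi x y N s A t - phi x y N s A' t\<bar>)
           \<le> xi x y N s r * l1norm N (\<lambda>t. phi x y N s A t - phi x y N s A' t)"
proof (cases "\<exists>t\<in>{1..N}. phi x y N s A t \<noteq> phi x y N s A' t")
  case True
  let ?d = "\<lambda>B B' t. phi x y N s B t - phi x y N s B' t"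
  let ?Q = "{(\<Sum>t\<in>T. \<bar>?d B B' t\<bar>) / l1norm N (?d B B') | B B' T.
     T \<subseteq> {1..N} \<and> (\<exists>t\<in>{1..N}. phi x y N s B t \<noteq> phi x y N s B' t) \<and> card T \<le> r}"
  have "bdd_above ?Q"
  proof (rule bdd_aboveI[of _ 1])
    fix q assume "q \<in> ?Q"
    then obtain B B' U where "U \<subseteq> {1..N}" "q = (\<Sum>t\<in>U. \<bar>?d B B' t\<bar>) / l1norm N (?d B B')"
      by blast
    then show "q \<le> 1"
      using sum_abs_le_l1norm[of U N "?d B B'"]
      by (cases "l1norm N (?d B B') = 0") (auto simp: divide_le_eq_1 order_less_le l1norm_nonneg)
  qed
  moreover have "(\<Sum>t\<in>T. \<bar>?d A A' t\<bar>) / l1norm N (?d A A') \<in> ?Q"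
    using assms True by blast
  ultimately have "(\<Sum>t\<in>T. \<bar>?d A A' t\<bar>) / l1norm N (?d A A') \<le> xi x y N s r"
    unfolding xi_def by (rule cSup_upper[rotated])
  moreover have "l1norm N (?d A A') > 0"
    using True by (simp add: l1norm_pos_iff)
  ultimately show ?thesis by (simp add: divide_le_eq mult.commute)
next
  case False
  then have "\<forall>t\<in>T. phi x y N s A t = phi x y N s A' t" using assms(1) by auto
  with False show ?thesis by (simp add: l1norm_def)
qed

lemma l1norm_diff_le_sparse:
  fixes p p' w :: "nat \<Rightarrow> real" and N :: nat
  defines "T \<equiv> {t\<in>{1..N}. w t \<noteq> 0}"
  shows "l1norm N (\<lambda>t. p' t - p t) - 2 * (\<Sum>t\<in>T. \<bar>p' t - p t\<bar>)
           \<le> l1norm N p' - l1norm N p + 2 * l1norm N (\<lambda>t. p t - w t)"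
proof -
  have "\<bar>p' t - p t\<bar> - 2 * (if t \<in> T then \<bar>p' t - p t\<bar> else 0)
          \<le> \<bar>p' t\<bar> - \<bar>p t\<bar> + 2 * \<bar>p t - w t\<bar>" if "t \<in> {1..N}" for t
    using that abs_triangle_ineq2[of "p t" "p' t"] abs_triangle_ineq4[of "p' t" "p t"]
    unfolding T_def by (cases "w t = 0") (auto simp: abs_minus_commute intro: add_increasing2)
  then have "(\<Sum>t=1..N. \<bar>p' t - p t\<bar> - 2 * (if t \<in> T then \<bar>p' t - p t\<bar> else 0))
               \<le> (\<Sum>t=1..N. \<bar>p' t\<bar> - \<bar>p t\<bar> + 2 * \<bar>p t - w t\<bar>)"
    by (rule sum_mono)
  moreover have "(\<Sum>t=1..N. (if t \<in> T then \<bar>p' t - p t\<bar> else 0)) = (\<Sum>t\<in>T. \<bar>p' t - p t\<bar>)"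
    unfolding T_def
    using sum.inter_filter[of "{1..N}" "\<lambda>t. \<bar>p' t - p t\<bar>" "\<lambda>t. w t \<noteq> 0"] by simp
  ultimately show ?thesis
    unfolding l1norm_def by (simp add: sum_subtractf sum.distrib sum_distrib_left[symmetric])
qed

lemma delta_greatest:
  assumes "\<And>w. l0 N w \<le> r \<Longrightarrow> c \<le> l1norm N (\<lambda>t. phi x y N s A t - w t)"
  shows "c \<le> delta x y N s r A"
  unfolding delta_def
proof (rule cInf_greatest)
  show "{l1norm N (\<lambda>t. phi x y N s A t - w t) | w. l0 N w \<le> r} \<noteq> {}"
  proof -
    have "l0 N (\<lambda>_. 0) \<le> r" by (simp add: l0_def)
    then show ?thesis by blast
  qed
qed (use assms in blast)

theorem lemma2:
  fixes x :: "nat \<Rightarrow> real^'n" and y :: "nat \<Rightarrow> real" and N s r :: nat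
  assumes "N \<ge> 1" and "s \<ge> 1" and "r \<le> N"
    and "xi x y N s r < 1/2"
  shows "\<forall>A A' :: nat \<Rightarrow> real^'n.
           l1norm N (\<lambda>t. phi x y N s A' t - phi x y N s A t)
             \<le> 1 / (1 - 2 * xi x y N s r)
                * (Jcost x y N s A' - Jcost x y N s A + 2 * delta x y N s r A)"
proof (intro allI)
  fix A A' :: "nat \<Rightarrow> real^'n"
  let ?p = "phi x y N s A" and ?p' = "phi x y N s A'" and ?\<xi> = "xi x y N s r"
  let ?v = "l1norm N (\<lambda>t. ?p' t - ?p t)"
  have "((1 - 2 * ?\<xi>) * ?v - l1norm N ?p' + l1norm N ?p) / 2 \<le> delta x y N s r A"
  proof (rule delta_greatest)
    fix w :: "nat \<Rightarrow> real" assume "l0 N w \<le> r"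
    then have "(\<Sum>t\<in>{t\<in>{1..N}. w t \<noteq> 0}. \<bar>?p' t - ?p t\<bar>) \<le> ?\<xi> * ?v"
      by (intro sum_abs_phi_diff_le_xi) (auto simp: l0_def)
    then show "((1 - 2 * ?\<xi>) * ?v - l1norm N ?p' + l1norm N ?p) / 2 \<le> l1norm N (\<lambda>t. ?p t - w t)"
      using l1norm_diff_le_sparse[of N ?p' ?p w] by (simp add: algebra_simps)
  qed
  moreover have "0 < 1 - 2 * ?\<xi>" using assms(4) by simp
  ultimately show "?v \<le> 1 / (1 - 2 * ?\<xi>) * (Jcost x y N s A' - Jcost x y N s A + 2 * delta x y N s r A)"
    by (simp add: Jcost_eq_l1norm_phi[OF assms(2)] field_simps)
qed

end
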